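(* Let $a,d\in\mathbb C$ with $a\notin\mathbb Z$ and $d\notin\{0,-1,-2,\dots\}$. Then, as an identity of formal power series in $x,y$, $${}_1F_1(a;d;x)\,{}_0F_1(1-a;y)=\mathrm H_5(a;d;x,-y)+\sum_{k=1}^\infty\sum_{l=1}^k\frac{(-1)^{k-l}(k-1)!}{(l-1)!\,l!\,(k-l)!}\,\frac{1}{(1-a)_k(1-a)_{k-l}(d)_l}\,x^ly^k\,\mathrm H_5(a-k+l;d+l;x,-y).$$
   Context: Pochhammer symbol: $(\lambda)_k=\Gamma(\lambda+k)/\Gamma(\lambda)$ for every integer $k$ (possibly negative) whenever defined; $(\lambda)_0=1$. ${}_1F_1(a;c;x)=\sum_{k\ge0}\frac{(a)_k}{(c)_k k!}x^k$, ${}_0F_1(c;x)=\sum_{k\ge0}\frac{x^k}{(c)_k k!}$. Confluent Horn function $\mathrm H_5(a;d;x,y)=\sum_{p,q\ge0}\frac{(a)_{p-q}}{(d)_p\,p!\,q!}x^py^q$. All functions are regarded as formal power series in $x,y$; the infinite double sum converges in the formal (degree) topology. *)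

theory Defs
  imports Complex_Main "HOL-Computational_Algebra.Formal_Power_Series"
begin

text \<open>Pochhammer symbol with an integer index:
  (lambda)_k = Gamma(lambda+k)/Gamma(lambda); for k = -n < 0 this is
  1 / ((lambda-n)(lambda-n+1)...(lambda-1)).\<close>
definition poch_int :: "complex \<Rightarrow> int \<Rightarrow> complex" where
  "poch_int lam k = (if 0 \<le> k then pochhammer lam (nat k)
                     else 1 / pochhammer (lam + of_int k) (nat (- k)))"

definition hyp1F1 :: "complex \<Rightarrow> complex \<Rightarrow> complex fps" where
  "hyp1F1 a c = Abs_fps (\<lambda>k. pochhammer a k / (pochhammer c k * fact k))"

definition hyp0F1 :: "complex \<Rightarrow> complex fps" where
  "hyp0F1 c = Abs_fps (\<lambda>k. 1 / (pochhammer c k * fact k))"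

text \<open>Formal power series in two variables x, y, represented by their
  coefficient function: F p q is the coefficient of x^p y^q.\<close>
type_synonym bfps = "nat \<Rightarrow> nat \<Rightarrow> complex"

definition in_x :: "complex fps \<Rightarrow> bfps" where
  "in_x f p q = (if q = 0 then fps_nth f p else 0)"

definition in_y :: "complex fps \<Rightarrow> bfps" where
  "in_y f p q = (if p = 0 then fps_nth f q else 0)"

definition bmult :: "bfps \<Rightarrow> bfps \<Rightarrow> bfps" where
  "bmult f g p q = (\<Sum>i\<le>p. \<Sum>j\<le>q. f i j * g (p - i) (q - j))"

definition bmonom :: "complex \<Rightarrow> nat \<Rightarrow> nat \<Rightarrow> bfps" where
  "bmonom c l k p q = (if p = l \<and> q = k then c else 0)"

definition neg_y :: "bfps \<Rightarrow> bfps" where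
  "neg_y f p q = (-1) ^ q * f p q"

definition H5 :: "complex \<Rightarrow> complex \<Rightarrow> bfps" where
  "H5 a d p q = poch_int a (int p - int q) / (pochhammer d p * fact p * fact q)"

text \<open>Convergence of an infinite sum of bivariate series in the formal
  (total degree) topology: for every N, eventually the partial sums agree
  with S on all coefficients of total degree < N.\<close>
definition bsums :: "(nat \<Rightarrow> bfps) \<Rightarrow> bfps \<Rightarrow> bool" where
  "bsums F S \<longleftrightarrow> (\<forall>N. \<forall>\<^sub>F n in sequentially.
       \<forall>p q. p + q < N \<longrightarrow> (\<Sum>k<n. F k p q) = S p q)"

end

theory Submission
  imports Defs "HOL-Analysis.Gamma_Function"
begin

text \<open>Only the terms with \<open>k \<le> q\<close> contribute to the coefficient of \<open>x\<^sup>p y\<^sup>q\<close>, so the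
  double series converges formally and the theorem is a coefficient identity. Writing
  \<open>m = k - l\<close>, the shift \<open>(a - m)\<^sub>m\<^sub>+\<^sub>s = (-1)\<^sup>m (1 - a)\<^sub>m (a)\<^sub>s\<close> cancels the factor
  \<open>(1 - a)\<^sub>k\<^sub>-\<^sub>l\<close>, after which the inner sum over \<open>l\<close> is a Vandermonde convolution giving
  \<open>(p + k - 1 choose k)\<close>. The remaining sum over \<open>k\<close> is the Chu-Vandermonde expansion of
  \<open>(a + p - q)\<^sub>q\<close>, and \<open>(a)\<^sub>p\<^sub>-\<^sub>q (a + p - q)\<^sub>q = (a)\<^sub>p\<close> yields the coefficient
  \<open>(a)\<^sub>p / ((d)\<^sub>p p! (1 - a)\<^sub>q q!)\<close> of the product.\<close>

lemma not_Ints_add_of_int: "(b::'a::ring_1) \<notin> \<int> \<Longrightarrow> b + of_int z \<notin> \<int>"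
  by (metis Ints_diff Ints_of_int add_diff_cancel_right')

lemma not_Ints_imp_not_nonpos_Ints: "(b::'a::ring_1) \<notin> \<int> \<Longrightarrow> b \<notin> \<int>\<^sub>\<le>\<^sub>0"
  using nonpos_Ints_subset_Ints by blast

lemma poch_int_of_nat [simp]: "poch_int b (int m) = pochhammer b m"
  by (simp add: poch_int_def)

lemma poch_int_Gamma:
  assumes "b \<notin> \<int>"
  shows "poch_int b z = Gamma (b + of_int z) / Gamma b"
proof (cases "0 \<le> z")
  case True
  then show ?thesis
    using pochhammer_Gamma[OF not_Ints_imp_not_nonpos_Ints[OF assms], of "nat z"]
    by (simp add: poch_int_def)
next
  case False
  have nonpole: "b + of_int z \<notin> \<int>\<^sub>\<le>\<^sub>0"
    using assms by (intro not_Ints_imp_not_nonpos_Ints not_Ints_add_of_int)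
  have "pochhammer (b + of_int z) (nat (-z))
      = Gamma (b + of_int z + of_nat (nat (-z))) / Gamma (b + of_int z)"
    using pochhammer_Gamma[OF nonpole] .
  also have "b + of_int z + of_nat (nat (-z)) = b"
    using False by simp
  finally show ?thesis
    using False Gamma_nonzero[OF nonpole] Gamma_nonzero[OF not_Ints_imp_not_nonpos_Ints[OF assms]]
    by (simp add: poch_int_def)
qed

lemma poch_int_add:
  assumes "b \<notin> \<int>"
  shows "poch_int b (w + z) = poch_int b w * poch_int (b + of_int w) z"
  using Gamma_nonzero[OF not_Ints_imp_not_nonpos_Ints[OF not_Ints_add_of_int[OF assms, of w]]]
  by (simp add: poch_int_Gamma[OF assms] poch_int_Gamma[OF not_Ints_add_of_int[OF assms]] add.assoc)

lemma pochhammer_one_minus_nonzero: "(a::'a::field_char_0) \<notin> \<int> \<Longrightarrow> pochhammer (1 - a) j \<noteq> 0"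
  by (auto simp: pochhammer_eq_0_iff algebra_simps dest: arg_cong[of _ _ "\<lambda>z. z + 1"])

lemma H5_shift:
  assumes "a \<notin> \<int>"
  shows "H5 (a - of_nat m) e p q
    = (-1) ^ m * pochhammer (1 - a) m * poch_int a (int p - int q - int m)
        / (pochhammer e p * fact p * fact q)"
proof -
  have "a - of_nat m \<notin> \<int>"
    using not_Ints_add_of_int[OF assms, of "- int m"] by simp
  then have "poch_int (a - of_nat m) (int p - int q)
      = pochhammer (a - of_nat m) m * poch_int a (int p - int q - int m)"
    using poch_int_add[of "a - of_nat m" "int m" "int p - int q - int m"] by simp
  moreover have "pochhammer (a - of_nat m) m = (-1) ^ m * pochhammer (1 - a) m"
    using pochhammer_minus'[of "a - 1" m] by simp
  ultimately show ?thesis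
    by (simp add: H5_def)
qed

lemma bmult_bmonom:
  "bmult (bmonom c l k) G p q = (if l \<le> p \<and> k \<le> q then c * G (p - l) (q - k) else 0)"
proof -
  have "bmult (bmonom c l k) G p q
      = (\<Sum>i\<le>p. \<Sum>j\<le>q. if j = k then (if i = l then c * G (p - l) (q - k) else 0) else 0)"
    unfolding bmult_def bmonom_def by (intro sum.cong) auto
  then show ?thesis
    by (cases "k \<le> q") (simp_all add: sum.delta)
qed

lemma bmult_in_x_in_y: "bmult (in_x f) (in_y g) p q = fps_nth f p * fps_nth g q"
proof -
  have "bmult (in_x f) (in_y g) p q
      = (\<Sum>i\<le>p. \<Sum>j\<le>q. if j = 0 then (if i = p then fps_nth f p * fps_nth g q else 0) else 0)"
    unfolding bmult_def in_x_def in_y_def by (intro sum.cong) auto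
  then show ?thesis
    by (simp add: sum.delta)
qed

lemma bsums_if_vanishing_below_diagonal:
  assumes vanish: "\<And>k p q. q < k \<Longrightarrow> F k p q = 0"
    and sum: "\<And>p q. (\<Sum>k\<le>q. F k p q) = S p q"
  shows "bsums F S"
  unfolding bsums_def
proof (intro allI eventually_sequentiallyI impI)
  fix N n p q :: nat
  assume "N \<le> n" "p + q < N"
  then have "{..q} \<subseteq> {..<n}"
    by auto
  then have "(\<Sum>k<n. F k p q) = (\<Sum>k\<le>q. F k p q)"
    by (intro sum.mono_neutral_right) (auto intro: vanish)
  then show "(\<Sum>k<n. F k p q) = S p q"
    using sum by simp
qed

lemma sum_choose_pred_mult_choose:
  assumes "1 \<le> k"
  shows "(\<Sum>l=1..k. (k - 1 choose (l - 1)) * (p choose l)) = (p + k - 1) choose k"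
proof -
  have "(p + (k - 1)) choose k = (\<Sum>l\<le>k. (p choose l) * (k - 1 choose (k - l)))"
    by (rule vandermonde[symmetric])
  also have "\<dots> = (\<Sum>l=1..k. (p choose l) * (k - 1 choose (k - l)))"
    using assms by (intro sum.mono_neutral_right) auto
  also have "\<dots> = (\<Sum>l=1..k. (k - 1 choose (l - 1)) * (p choose l))"
  proof (intro sum.cong refl)
    fix l assume "l \<in> {1..k}"
    then have "l - 1 \<le> k - 1" "k - 1 - (l - 1) = k - l"
      by auto
    then have "k - 1 choose (k - l) = k - 1 choose (l - 1)"
      by (metis binomial_symmetric)
    then show "(p choose l) * (k - 1 choose (k - l)) = (k - 1 choose (l - 1)) * (p choose l)"
      by simp
  qed
  finally show ?thesis
    using assms by simp
qed

lemma pochhammer_of_nat_eq_choose: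
  "pochhammer (of_nat p :: 'a::field_char_0) k = of_nat ((p + k - 1) choose k) * fact k"
proof (cases "p = 0")
  case True
  then show ?thesis
    by (cases k) (auto simp: pochhammer_rec)
next
  case False
  have "(of_nat ((p + k - 1) choose k) :: 'a) = pochhammer (of_nat (p + k - 1) - of_nat k + 1) k / fact k"
    by (simp add: binomial_gbinomial gbinomial_pochhammer')
  also have "of_nat (p + k - 1) - of_nat k + 1 = (of_nat p :: 'a)"
    using False by (simp add: of_nat_diff)
  finally show ?thesis
    by simp
qed

text \<open>Chu-Vandermonde for \<open>(p + (1 - c - q))\<^sub>q\<close>, normalised by \<open>(c)\<^sub>q\<close>.\<close>

lemma pochhammer_shifted_eq_sum:
  fixes c :: "'a::field_char_0"
  assumes nonzero: "pochhammer c q \<noteq> 0"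
  shows "pochhammer (of_nat p + 1 - c - of_nat q) q
    = fact q * pochhammer c q
      * (\<Sum>k\<le>q. of_nat ((p + k - 1) choose k) * (-1) ^ (q - k) / (pochhammer c k * fact (q - k)))"
proof -
  have "pochhammer (of_nat p + 1 - c - of_nat q) q
      = (\<Sum>k\<le>q. of_nat (q choose k) * pochhammer (of_nat p) k * pochhammer (1 - c - of_nat q) (q - k))"
    using pochhammer_binomial_sum[of "of_nat p" "1 - c - of_nat q" q] by (simp add: algebra_simps)
  also have "\<dots> = (\<Sum>k\<le>q. fact q * pochhammer c q
      * (of_nat ((p + k - 1) choose k) * (-1) ^ (q - k) / (pochhammer c k * fact (q - k))))"
  proof (intro sum.cong refl)
    fix k assume "k \<in> {..q}"
    then have kq: "k \<le> q"
      by simp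
    have "pochhammer (1 - c - of_nat q) (q - k)
        = pochhammer (- (c + of_nat k) - of_nat (q - k) + 1) (q - k)"
      using kq by (simp add: of_nat_diff algebra_simps)
    also have "\<dots> = (-1) ^ (q - k) * pochhammer (c + of_nat k) (q - k)"
      by (simp only: pochhammer_minus' minus_minus)
    finally have "pochhammer (1 - c - of_nat q) (q - k) = (-1) ^ (q - k) * pochhammer (c + of_nat k) (q - k)" .
    moreover have "pochhammer c q = pochhammer c k * pochhammer (c + of_nat k) (q - k)"
      using pochhammer_product[OF kq] .
    moreover have "pochhammer c k \<noteq> 0"
      using nonzero pochhammer_product[OF kq, of c] by auto
    ultimately show "of_nat (q choose k) * pochhammer (of_nat p) k * pochhammer (1 - c - of_nat q) (q - k)
        = fact q * pochhammer c q
          * (of_nat ((p + k - 1) choose k) * (-1) ^ (q - k) / (pochhammer c k * fact (q - k)))"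
      using kq by (simp add: binomial_fact pochhammer_of_nat_eq_choose field_simps)
  qed
  finally show ?thesis
    by (simp add: sum_distrib_left)
qed

definition expansion_coeff :: "complex \<Rightarrow> complex \<Rightarrow> nat \<Rightarrow> nat \<Rightarrow> complex" where
  "expansion_coeff a d k l =
     (-1) ^ (k - l) * fact (k - 1) / (fact (l - 1) * fact l * fact (k - l))
     * (1 / (pochhammer (1 - a) k * pochhammer (1 - a) (k - l) * pochhammer d l))"

definition expansion_term :: "complex \<Rightarrow> complex \<Rightarrow> nat \<Rightarrow> bfps" where
  "expansion_term a d = (\<lambda>k. if k = 0 then neg_y (H5 a d)
     else (\<lambda>p q. \<Sum>l\<in>{1..k}. bmult (bmonom (expansion_coeff a d k l) l k)
                               (neg_y (H5 (a - of_nat k + of_nat l) (d + of_nat l))) p q))"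

lemma expansion_summand_eq:
  fixes a d :: complex
  assumes a: "a \<notin> \<int>" and d: "\<forall>n::nat. d \<noteq> - of_nat n"
    and l: "1 \<le> l" "l \<le> k" and kq: "k \<le> q"
  shows "bmult (bmonom (expansion_coeff a d k l) l k)
           (neg_y (H5 (a - of_nat k + of_nat l) (d + of_nat l))) p q
    = of_nat ((k - 1 choose (l - 1)) * (p choose l))
      * ((-1) ^ (q - k) * poch_int a (int p - int q)
         / (pochhammer (1 - a) k * pochhammer d p * fact p * fact (q - k)))"
proof (cases "l \<le> p")
  case False
  then show ?thesis
    by (simp add: bmult_bmonom)
next
  case True
  define m where "m = k - l"
  have shift: "a - of_nat k + of_nat l = a - of_nat m"
    using l by (simp add: m_def of_nat_diff)
  have "int (p - l) - int (q - k) - int m = int p - int q"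
    using l kq True by (simp add: m_def)
  then have H: "neg_y (H5 (a - of_nat k + of_nat l) (d + of_nat l)) (p - l) (q - k)
      = (-1) ^ (q - k) * ((-1) ^ m * pochhammer (1 - a) m * poch_int a (int p - int q)
        / (pochhammer (d + of_nat l) (p - l) * fact (p - l) * fact (q - k)))"
    by (simp add: neg_y_def shift H5_shift[OF a])
  have split_d: "pochhammer d p = pochhammer d l * pochhammer (d + of_nat l) (p - l)"
    using pochhammer_product[OF True] .
  have choose: "(of_nat ((k - 1 choose (l - 1)) * (p choose l)) :: complex)
      = fact (k - 1) / (fact (l - 1) * fact m) * (fact p / (fact l * fact (p - l)))"
    using l True by (simp add: binomial_fact m_def)
  have sign: "(-1::complex) ^ m * (-1) ^ m = 1"
    by (simp flip: power_add add: mult_2[symmetric])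
  have "pochhammer (1 - a) k \<noteq> 0" "pochhammer (1 - a) m \<noteq> 0" "pochhammer d p \<noteq> 0"
    using pochhammer_one_minus_nonzero[OF a] d by (auto simp: pochhammer_eq_0_iff)
  moreover have "bmult (bmonom (expansion_coeff a d k l) l k)
      (neg_y (H5 (a - of_nat k + of_nat l) (d + of_nat l))) p q
      = expansion_coeff a d k l * neg_y (H5 (a - of_nat k + of_nat l) (d + of_nat l)) (p - l) (q - k)"
    using True kq by (simp add: bmult_bmonom)
  ultimately show ?thesis
    unfolding H expansion_coeff_def choose split_d m_def[symmetric]
    using sign by (simp add: field_simps)
qed

lemma expansion_term_eq_0: "q < k \<Longrightarrow> expansion_term a d k p q = 0"
  by (simp add: expansion_term_def bmult_bmonom)

lemma expansion_term_eq:
  fixes a d :: complex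
  assumes a: "a \<notin> \<int>" and d: "\<forall>n::nat. d \<noteq> - of_nat n" and kq: "k \<le> q"
  shows "expansion_term a d k p q
    = of_nat ((p + k - 1) choose k) * (-1) ^ (q - k) / (pochhammer (1 - a) k * fact (q - k))
      * (poch_int a (int p - int q) / (pochhammer d p * fact p))"
proof (cases "k = 0")
  case True
  then show ?thesis
    by (simp add: expansion_term_def neg_y_def H5_def)
next
  case False
  define c where "c = (-1) ^ (q - k) * poch_int a (int p - int q)
    / (pochhammer (1 - a) k * pochhammer d p * fact p * fact (q - k))"
  have "expansion_term a d k p q = (\<Sum>l=1..k. of_nat ((k - 1 choose (l - 1)) * (p choose l)) * c)"
    using False by (simp add: expansion_term_def expansion_summand_eq[OF a d _ _ kq] c_def)
  also have "\<dots> = of_nat (\<Sum>l=1..k. (k - 1 choose (l - 1)) * (p choose l)) * c"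
    by (simp add: sum_distrib_right)
  also have "\<dots> = of_nat ((p + k - 1) choose k) * c"
    using False by (subst sum_choose_pred_mult_choose) auto
  finally show ?thesis
    by (simp add: c_def field_simps)
qed

lemma sum_expansion_term:
  fixes a d :: complex
  assumes a: "a \<notin> \<int>" and d: "\<forall>n::nat. d \<noteq> - of_nat n"
  shows "(\<Sum>k\<le>q. expansion_term a d k p q) = bmult (in_x (hyp1F1 a d)) (in_y (hyp0F1 (1 - a))) p q"
proof -
  define s where "s = poch_int a (int p - int q)"
  define Y where "Y = (\<Sum>k\<le>q. of_nat ((p + k - 1) choose k) * (-1) ^ (q - k)
                            / (pochhammer (1 - a) k * fact (q - k)))"
  have nonzero: "pochhammer (1 - a) q \<noteq> 0" "pochhammer d p \<noteq> 0"
    using pochhammer_one_minus_nonzero[OF a] d by (auto simp: pochhammer_eq_0_iff)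
  have "(\<Sum>k\<le>q. expansion_term a d k p q)
      = (\<Sum>k\<le>q. of_nat ((p + k - 1) choose k) * (-1) ^ (q - k)
                    / (pochhammer (1 - a) k * fact (q - k)) * (s / (pochhammer d p * fact p)))"
    by (intro sum.cong refl) (simp add: expansion_term_eq[OF a d] s_def)
  also have "\<dots> = Y * (s / (pochhammer d p * fact p))"
    by (simp only: Y_def sum_distrib_right)
  finally have "(\<Sum>k\<le>q. expansion_term a d k p q) = Y * (s / (pochhammer d p * fact p))" .
  moreover have "pochhammer a p = s * pochhammer (a + of_int (int p - int q)) q"
    using poch_int_add[OF a, of "int p - int q" "int q"] by (simp add: s_def)
  moreover have "pochhammer (a + of_int (int p - int q)) q = fact q * pochhammer (1 - a) q * Y"
    using pochhammer_shifted_eq_sum[OF nonzero(1), of p] by (simp add: Y_def algebra_simps)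
  ultimately show ?thesis
    using nonzero by (simp add: bmult_in_x_in_y hyp1F1_def hyp0F1_def field_simps)
qed

theorem mainTheorem11:
  fixes a d :: complex
  assumes "a \<notin> \<int>"
    and "\<forall>n::nat. d \<noteq> - of_nat n"
  shows "bsums
     (\<lambda>k. if k = 0 then neg_y (H5 a d)
          else (\<lambda>p q. \<Sum>l\<in>{1..k}.
             bmult (bmonom ((-1) ^ (k - l) * fact (k - 1)
                              / (fact (l - 1) * fact l * fact (k - l))
                            * (1 / (pochhammer (1 - a) k * pochhammer (1 - a) (k - l)
                                    * pochhammer d l))) l k)
                   (neg_y (H5 (a - of_nat k + of_nat l) (d + of_nat l))) p q))
     (bmult (in_x (hyp1F1 a d)) (in_y (hyp0F1 (1 - a))))"
proof -
  have "bsums (expansion_term a d) (bmult (in_x (hyp1F1 a d)) (in_y (hyp0F1 (1 - a))))"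
    using expansion_term_eq_0 sum_expansion_term[OF assms]
    by (rule bsums_if_vanishing_below_diagonal)
  then show ?thesis
    unfolding expansion_term_def expansion_coeff_def .
qed

end
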